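(* Let $\mathsf E$ be a completely unsharp observable on $\mathcal H_S$, and let $\mathcal I$ be an $\mathsf E$-instrument with the following property: for every full-rank state $\rho$ on $\mathcal H_S$ and every outcome $x$, the operator $\mathcal I_x(\rho)$ is positive definite. Then $\mathcal I$ is implemented by some measurement scheme constrained by the third law.
   Context: All Hilbert spaces are finite-dimensional and complex. A state is a positive operator of unit trace; it is full-rank if it is positive definite. A channel is a completely positive trace-preserving linear map. A channel is constrained by the third law if it maps every full-rank state on its input space to a full-rank state on its output space. Let $2\le\dim\mathcal H_S<\infty$. An observable is a finite family $\mathsf E=\{\mathsf E_x\}_{x\in\mathcal X}$ of nonzero operators with $0\le\mathsf E_x\le\mathbb 1$ and $\sum_x\mathsf E_x=\mathbb 1$. It is completely unsharp if, for every $x$, the spectrum of $\mathsf E_x$ contains neither $0$ nor $1$. An $\mathsf E$-instrument is a family $\{\mathcal I_x\}_{x\in\mathcal X}$ of completely positive maps on $\mathcal L(\mathcal H_S)$ with $\mathrm{tr}[\mathcal I_x(\rho)]=\mathrm{tr}[\mathsf E_x\rho]$ for all $x$ and all states $\rho$. A measurement scheme $(\mathcal H_A,\xi,\mathcal E,\mathsf Z)$ consists of: - a finite-dimensional $\mathcal H_A$; - a state $\xi$ on $\mathcal H_A$; - a channel $\mathcal E$ on $\mathcal L(\mathcal H_S\otimes\mathcal H_A)$; - positive operators $\{\mathsf Z_x\}_{x\in\mathcal X}$ on $\mathcal H_A$ summing to $\mathbb 1$. It implements $\mathcal I_x(\rho)=\mathrm{tr}_A[(\mathbb 1\otimes\mathsf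 Z_x)\mathcal E(\rho\otimes\xi)]$. It is constrained by the third law if $\xi$ is full-rank and $\mathcal E$ is constrained by the third law. *)

theory Defs
  imports "Jordan_Normal_Form.Char_Poly"
begin

text \<open>Finite-dimensional complex Hilbert spaces are modelled as C^d, operators as
  d x d complex matrices (Jordan_Normal_Form). The tensor product C^m (x) C^n is
  identified with C^(m*n) via the index (i,k) |-> i*n + k (Kronecker convention).\<close>

definition mtrace :: "complex mat \<Rightarrow> complex" where
  "mtrace A = (\<Sum>i<dim_row A. A $$ (i,i))"

definition qform :: "complex mat \<Rightarrow> complex vec \<Rightarrow> complex" where
  "qform A v = (\<Sum>i<dim_row A. \<Sum>j<dim_col A. cnj (v $ i) * A $$ (i,j) * v $ j)"

definition psd :: "nat \<Rightarrow> complex mat \<Rightarrow> bool" where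
  "psd d A \<longleftrightarrow> A \<in> carrier_mat d d \<and>
     (\<forall>v \<in> carrier_vec d. Im (qform A v) = 0 \<and> Re (qform A v) \<ge> 0)"

definition pd :: "nat \<Rightarrow> complex mat \<Rightarrow> bool" where
  "pd d A \<longleftrightarrow> psd d A \<and> (\<forall>v \<in> carrier_vec d. v \<noteq> 0\<^sub>v d \<longrightarrow> Re (qform A v) > 0)"

definition is_state :: "nat \<Rightarrow> complex mat \<Rightarrow> bool" where
  "is_state d \<rho> \<longleftrightarrow> psd d \<rho> \<and> mtrace \<rho> = 1"

definition full_rank_state :: "nat \<Rightarrow> complex mat \<Rightarrow> bool" where
  "full_rank_state d \<rho> \<longleftrightarrow> is_state d \<rho> \<and> pd d \<rho>"

definition kron :: "complex mat \<Rightarrow> complex mat \<Rightarrow> complex mat" where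
  "kron A B = mat (dim_row A * dim_row B) (dim_col A * dim_col B)
     (\<lambda>(i,j). A $$ (i div dim_row B, j div dim_col B) * B $$ (i mod dim_row B, j mod dim_col B))"

definition ptrace2 :: "nat \<Rightarrow> nat \<Rightarrow> complex mat \<Rightarrow> complex mat" where
  "ptrace2 m n M = mat m m (\<lambda>(i,j). \<Sum>k<n. M $$ (i*n + k, j*n + k))"

definition lin_map :: "nat \<Rightarrow> nat \<Rightarrow> (complex mat \<Rightarrow> complex mat) \<Rightarrow> bool" where
  "lin_map d d' \<Phi> \<longleftrightarrow>
     (\<forall>A \<in> carrier_mat d d. \<Phi> A \<in> carrier_mat d' d') \<and>
     (\<forall>A \<in> carrier_mat d d. \<forall>B \<in> carrier_mat d d. \<Phi> (A + B) = \<Phi> A + \<Phi> B) \<and>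
     (\<forall>A \<in> carrier_mat d d. \<forall>c. \<Phi> (c \<cdot>\<^sub>m A) = c \<cdot>\<^sub>m \<Phi> A)"

text \<open>The map id_k (x) Phi on L(C^k (x) C^d): apply Phi to each d x d block.\<close>
definition ampl :: "nat \<Rightarrow> nat \<Rightarrow> nat \<Rightarrow> (complex mat \<Rightarrow> complex mat) \<Rightarrow> complex mat \<Rightarrow> complex mat" where
  "ampl k d d' \<Phi> M = mat (k*d') (k*d') (\<lambda>(p,q).
     \<Phi> (mat d d (\<lambda>(a,b). M $$ ((p div d')*d + a, (q div d')*d + b))) $$ (p mod d', q mod d'))"

definition cp_map :: "nat \<Rightarrow> nat \<Rightarrow> (complex mat \<Rightarrow> complex mat) \<Rightarrow> bool" where
  "cp_map d d' \<Phi> \<longleftrightarrow> lin_map d d' \<Phi> \<and>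
     (\<forall>k M. psd (k*d) M \<longrightarrow> psd (k*d') (ampl k d d' \<Phi> M))"

definition channel :: "nat \<Rightarrow> nat \<Rightarrow> (complex mat \<Rightarrow> complex mat) \<Rightarrow> bool" where
  "channel d d' \<Phi> \<longleftrightarrow> cp_map d d' \<Phi> \<and> (\<forall>A \<in> carrier_mat d d. mtrace (\<Phi> A) = mtrace A)"

definition third_law_channel :: "nat \<Rightarrow> nat \<Rightarrow> (complex mat \<Rightarrow> complex mat) \<Rightarrow> bool" where
  "third_law_channel d d' \<Phi> \<longleftrightarrow> channel d d' \<Phi> \<and>
     (\<forall>\<rho>. full_rank_state d \<rho> \<longrightarrow> full_rank_state d' (\<Phi> \<rho>))"

definition msum :: "nat \<Rightarrow> 'x set \<Rightarrow> ('x \<Rightarrow> complex mat) \<Rightarrow> complex mat" where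
  "msum d X E = mat d d (\<lambda>(i,j). \<Sum>x\<in>X. E x $$ (i,j))"

definition observable :: "nat \<Rightarrow> 'x set \<Rightarrow> ('x \<Rightarrow> complex mat) \<Rightarrow> bool" where
  "observable d X E \<longleftrightarrow> finite X \<and>
     (\<forall>x \<in> X. E x \<noteq> 0\<^sub>m d d \<and> psd d (E x) \<and> psd d (1\<^sub>m d - E x)) \<and>
     msum d X E = 1\<^sub>m d"

definition completely_unsharp :: "nat \<Rightarrow> 'x set \<Rightarrow> ('x \<Rightarrow> complex mat) \<Rightarrow> bool" where
  "completely_unsharp d X E \<longleftrightarrow> observable d X E \<and>
     (\<forall>x \<in> X. \<not> eigenvalue (E x) 0 \<and> \<not> eigenvalue (E x) 1)"

definition E_instrument :: "nat \<Rightarrow> 'x set \<Rightarrow> ('x \<Rightarrow> complex mat) \<Rightarrow> ('x \<Rightarrow> complex mat \<Rightarrow> complex mat) \<Rightarrow> bool" where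
  "E_instrument d X E I \<longleftrightarrow> (\<forall>x \<in> X. cp_map d d (I x)) \<and>
     (\<forall>x \<in> X. \<forall>\<rho>. is_state d \<rho> \<longrightarrow> mtrace (I x \<rho>) = mtrace (E x * \<rho>))"

text \<open>Measurement scheme (H_A = C^dA, xi, channel Ec on C^dS (x) C^dA, pointer Z),
  implementing I, and constrained by the third law.\<close>
definition implements :: "nat \<Rightarrow> 'x set \<Rightarrow> ('x \<Rightarrow> complex mat \<Rightarrow> complex mat) \<Rightarrow>
    nat \<Rightarrow> complex mat \<Rightarrow> (complex mat \<Rightarrow> complex mat) \<Rightarrow> ('x \<Rightarrow> complex mat) \<Rightarrow> bool" where
  "implements dS X I dA \<xi> Ec Z \<longleftrightarrow>
     is_state dA \<xi> \<and> channel (dS*dA) (dS*dA) Ec \<and>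
     (\<forall>x \<in> X. psd dA (Z x)) \<and> msum dA X Z = 1\<^sub>m dA \<and>
     (\<forall>x \<in> X. \<forall>\<rho> \<in> carrier_mat dS dS.
        I x \<rho> = ptrace2 dS dA (kron (1\<^sub>m dS) (Z x) * Ec (kron \<rho> \<xi>)))"

definition third_law_scheme :: "nat \<Rightarrow> nat \<Rightarrow> complex mat \<Rightarrow> (complex mat \<Rightarrow> complex mat) \<Rightarrow> bool" where
  "third_law_scheme dS dA \<xi> Ec \<longleftrightarrow> full_rank_state dA \<xi> \<and> third_law_channel (dS*dA) (dS*dA) Ec"

end

theory Submission
  imports Defs
begin

text \<open>Measure first, then record: the channel traces out the apparatus, applies the
  instrument and writes the outcome x into an orthonormal pointer basis of an apparatus
  with one level per outcome, \<open>\<E>(\<sigma>) = \<Sum>\<^sub>x \<I>\<^sub>x(tr\<^sub>A \<sigma>) \<otimes> |x\<rangle>\<langle>x|\<close>.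
  Reading the pointer off with the projections \<open>|x\<rangle>\<langle>x|\<close> from the maximally mixed
  apparatus state recovers \<open>\<I>\<^sub>x\<close>. Partial traces of full-rank states are full rank, so by
  the hypothesis on \<open>\<I>\<close> every block of \<open>\<E>(\<sigma>)\<close> is positive definite, and a direct sum of
  positive definite blocks is positive definite: \<open>\<E>\<close> obeys the third law.\<close>

lemma sum_lessThan_mult_split:
  fixes f :: "nat \<Rightarrow> 'a::comm_monoid_add"
  shows "(\<Sum>p<m*n. f p) = (\<Sum>u<m. \<Sum>s<n. f (u*n+s))"
proof -
  have "(\<Sum>p<m*n. f p) = (\<Sum>u<m. sum f {u*n..<u*n+n})"
    using sum.nat_group[of f n m] by simp
  also have "\<dots> = (\<Sum>u<m. \<Sum>s<n. f (u*n+s))"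
    by (rule sum.cong[OF refl])
      (simp add: sum.atLeastLessThan_shift_0[of f] lessThan_atLeast0 comp_def add.commute)
  finally show ?thesis .
qed

lemma kron_index_less: "u < m \<Longrightarrow> s < (n::nat) \<Longrightarrow> u*n+s < m*n"
proof -
  assume a: "u < m" "s < n"
  have "u*n+s < Suc u * n" using a by simp
  also have "\<dots> \<le> m*n" using a by (intro mult_right_mono) auto
  finally show ?thesis .
qed

lemma kron_index_div_less: "p < m*n \<Longrightarrow> p div n < (m::nat)"
  by (simp add: less_mult_imp_div_less)

lemma kron_index_mod_less: "p < m*n \<Longrightarrow> p mod n < (n::nat)"
  by (cases "n = 0") auto

lemma mod_mult_div: "(n::nat) > 0 \<Longrightarrow> a mod (m*n) div n = a div n mod m"
proof -
  assume "n > 0"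
  moreover have "a mod (m*n) = n * (a div n mod m) + a mod n" by (metis mod_mult2_eq mult.commute)
  ultimately show ?thesis by simp
qed

lemma nonzero_vec_obtain_index:
  assumes "v \<in> carrier_vec d" "v \<noteq> 0\<^sub>v d"
  obtains i where "i < d" "v $ i \<noteq> 0"
  using assms by (metis eq_vecI carrier_vecD index_zero_vec(1,2))

subsection \<open>States span all matrices\<close>

lemma mtrace_add: "A \<in> carrier_mat d d \<Longrightarrow> B \<in> carrier_mat d d \<Longrightarrow> mtrace (A + B) = mtrace A + mtrace B"
  by (simp add: mtrace_def sum.distrib)

lemma mtrace_smult: "A \<in> carrier_mat d d \<Longrightarrow> mtrace (c \<cdot>\<^sub>m A) = c * mtrace A"
  by (simp add: mtrace_def sum_distrib_left)

lemma qform_smult: "qform (c \<cdot>\<^sub>m A) v = c * qform A v"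
  by (simp add: qform_def sum_distrib_left algebra_simps)

lemma psd_smult: "psd d A \<Longrightarrow> r \<ge> 0 \<Longrightarrow> psd d (complex_of_real r \<cdot>\<^sub>m A)"
  by (auto simp: psd_def qform_smult)

definition outer_self :: "nat \<Rightarrow> complex vec \<Rightarrow> complex mat" where
  "outer_self d v = mat d d (\<lambda>(a,b). v $ a * cnj (v $ b))"

lemma psd_outer_self: "psd d (outer_self d v)"
  unfolding psd_def
proof (intro conjI ballI)
  show "outer_self d v \<in> carrier_mat d d" by (simp add: outer_self_def)
  fix w :: "complex vec"
  define z where "z = (\<Sum>a<d. cnj (w $ a) * v $ a)"
  have "qform (outer_self d v) w = z * cnj z"
    by (simp add: qform_def outer_self_def z_def sum_product cnj_sum algebra_simps)
  also have "\<dots> = complex_of_real ((cmod z)^2)" by (metis complex_norm_square)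
  finally show "Im (qform (outer_self d v) w) = 0" "Re (qform (outer_self d v) w) \<ge> 0"
    by simp_all
qed

lemma mtrace_outer_self: "mtrace (outer_self d v) = complex_of_real (\<Sum>a<d. (cmod (v $ a))^2)"
  by (simp add: mtrace_def outer_self_def of_real_sum)
    (intro sum.cong refl, metis complex_norm_square of_real_power)

definition mat_unit :: "nat \<Rightarrow> nat \<Rightarrow> nat \<Rightarrow> complex mat" where
  "mat_unit d i j = mat d d (\<lambda>(a,b). if a = i \<and> b = j then 1 else 0)"

text \<open>Every \<open>v v\<^sup>*\<close> is a multiple of a state, and every matrix unit is a combination of
  such rank-one matrices (polarisation).\<close>

locale state_annihilating_functional =
  fixes d :: nat and h :: "complex mat \<Rightarrow> complex"
  assumes add: "\<And>A B. A \<in> carrier_mat d d \<Longrightarrow> B \<in> carrier_mat d d \<Longrightarrow> h (A + B) = h A + h B"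
    and smult: "\<And>A c. A \<in> carrier_mat d d \<Longrightarrow> h (c \<cdot>\<^sub>m A) = c * h A"
    and vanishes_on_states: "\<And>\<rho>. is_state d \<rho> \<Longrightarrow> h \<rho> = 0"
begin

lemma vanishes_outer_self: "h (outer_self d v) = 0"
proof -
  define r where "r = (\<Sum>a<d. (cmod (v $ a))^2)"
  have C: "outer_self d v \<in> carrier_mat d d" by (simp add: outer_self_def)
  show ?thesis
  proof (cases "r = 0")
    case True
    then have "\<forall>a\<in>{..<d}. (cmod (v $ a))^2 = 0" unfolding r_def
      by (subst sum_nonneg_eq_0_iff[symmetric]) auto
    then have "outer_self d v = 0 \<cdot>\<^sub>m outer_self d v" by (intro eq_matI) (auto simp: outer_self_def)
    then show ?thesis using smult[OF C, of 0] by simp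
  next
    case False
    then have r: "r > 0" unfolding r_def by (metis sum_nonneg zero_le_power2 order_le_less)
    have "is_state d (complex_of_real (1/r) \<cdot>\<^sub>m outer_self d v)"
      unfolding is_state_def using r psd_smult[OF psd_outer_self[of d v], of "1/r"]
      by (simp add: mtrace_smult[OF C] mtrace_outer_self r_def[symmetric])
    moreover have "outer_self d v = complex_of_real r \<cdot>\<^sub>m (complex_of_real (1/r) \<cdot>\<^sub>m outer_self d v)"
      using r by (intro eq_matI) (auto simp: outer_self_def)
    ultimately show ?thesis using smult C vanishes_on_states by (metis mult_zero_right smult_carrier_mat)
  qed
qed

lemma vanishes_mat_unit:
  assumes "i < d" "j < d"
  shows "h (mat_unit d i j) = 0"
proof (cases "i = j")
  case True
  then have "mat_unit d i j = outer_self d (unit_vec d i)" using assms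
    by (intro eq_matI) (auto simp: mat_unit_def outer_self_def)
  then show ?thesis using vanishes_outer_self by simp
next
  case False
  let ?u = "unit_vec d i + unit_vec d j" and ?w = "unit_vec d i + \<i> \<cdot>\<^sub>v unit_vec d j"
  have "2 \<cdot>\<^sub>m mat_unit d i j = (outer_self d ?u + \<i> \<cdot>\<^sub>m outer_self d ?w)
      + ((- (1+\<i>)) \<cdot>\<^sub>m outer_self d (unit_vec d i) + (- (1+\<i>)) \<cdot>\<^sub>m outer_self d (unit_vec d j))"
    using False assms by (intro eq_matI) (auto simp: mat_unit_def outer_self_def algebra_simps)
  moreover have "\<And>v. outer_self d v \<in> carrier_mat d d" by (simp add: outer_self_def)
  ultimately have "h (2 \<cdot>\<^sub>m mat_unit d i j) = 0"
    by (simp add: add smult vanishes_outer_self)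
  then show ?thesis using smult[of "mat_unit d i j" 2] by (simp add: mat_unit_def)
qed

lemma vanishes: assumes B: "B \<in> carrier_mat d d" shows "h B = 0"
proof -
  define B_on where "B_on S = mat d d (\<lambda>(a,b). if (a,b) \<in> S then B $$ (a,b) else 0)" for S
  have "h (B_on S) = 0" if "finite S" "S \<subseteq> {..<d} \<times> {..<d}" for S
    using that
  proof (induction S rule: finite_induct)
    case empty
    have "B_on {} = 0 \<cdot>\<^sub>m B_on {}" by (intro eq_matI) (auto simp: B_on_def)
    then show ?case using smult[of "B_on {}" 0] by (simp add: B_on_def)
  next
    case (insert p S)
    obtain i j where p: "p = (i,j)" by fastforce
    have "B_on (insert p S) = B_on S + B $$ (i,j) \<cdot>\<^sub>m mat_unit d i j"
      using insert p by (intro eq_matI) (auto simp: B_on_def mat_unit_def)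
    moreover have "B_on S \<in> carrier_mat d d" "mat_unit d i j \<in> carrier_mat d d"
      by (simp_all add: B_on_def mat_unit_def)
    ultimately show ?case using insert p by (simp add: add smult vanishes_mat_unit)
  qed
  moreover have "B_on ({..<d} \<times> {..<d}) = B" using B by (intro eq_matI) (auto simp: B_on_def)
  ultimately show ?thesis by force
qed

end

lemma mtrace_eq_on_carrier_if_eq_on_states:
  assumes lin: "lin_map d d \<Phi>" and E: "E \<in> carrier_mat d d"
    and on_states: "\<forall>\<rho>. is_state d \<rho> \<longrightarrow> mtrace (\<Phi> \<rho>) = mtrace (E * \<rho>)"
    and B: "B \<in> carrier_mat d d"
  shows "mtrace (\<Phi> B) = mtrace (E * B)"
proof -
  interpret state_annihilating_functional d "\<lambda>B. mtrace (\<Phi> B) - mtrace (E * B)"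
  proof
    fix A B :: "complex mat" assume A: "A \<in> carrier_mat d d" and B: "B \<in> carrier_mat d d"
    have "\<Phi> (A + B) = \<Phi> A + \<Phi> B" "\<Phi> A \<in> carrier_mat d d" "\<Phi> B \<in> carrier_mat d d"
      using lin A B by (auto simp: lin_map_def)
    moreover have "E * (A + B) = E * A + E * B" using E A B by (simp add: mult_add_distrib_mat)
    ultimately show "mtrace (\<Phi> (A + B)) - mtrace (E * (A + B))
        = mtrace (\<Phi> A) - mtrace (E * A) + (mtrace (\<Phi> B) - mtrace (E * B))"
      using E A B by (simp add: mtrace_add[of _ d])
  next
    fix A :: "complex mat" and c assume A: "A \<in> carrier_mat d d"
    have "\<Phi> (c \<cdot>\<^sub>m A) = c \<cdot>\<^sub>m \<Phi> A" "\<Phi> A \<in> carrier_mat d d" using lin A by (auto simp: lin_map_def)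
    moreover have "E * (c \<cdot>\<^sub>m A) = c \<cdot>\<^sub>m (E * A)" using E A by (simp add: mult_smult_distrib)
    ultimately show "mtrace (\<Phi> (c \<cdot>\<^sub>m A)) - mtrace (E * (c \<cdot>\<^sub>m A)) = c * (mtrace (\<Phi> A) - mtrace (E * A))"
      using E A by (simp add: mtrace_smult[of _ d] algebra_simps)
  qed (use on_states in simp)
  show ?thesis using vanishes[OF B] by simp
qed

lemma sum_mtrace_mult_msum:
  assumes "\<forall>x\<in>X. E x \<in> carrier_mat m m" "B \<in> carrier_mat m m"
  shows "(\<Sum>x\<in>X. mtrace (E x * B)) = mtrace (msum m X E * B)"
proof -
  have "(\<Sum>x\<in>X. mtrace (E x * B)) = (\<Sum>x\<in>X. \<Sum>i<m. \<Sum>j<m. E x $$ (i,j) * B $$ (j,i))"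
    using assms by (intro sum.cong refl) (auto simp: mtrace_def scalar_prod_def lessThan_atLeast0)
  also have "\<dots> = (\<Sum>i<m. \<Sum>j<m. msum m X E $$ (i,j) * B $$ (j,i))"
    by (simp add: sum.swap[of _ X] sum_distrib_right msum_def)
  also have "\<dots> = mtrace (msum m X E * B)"
    using assms by (simp add: mtrace_def msum_def scalar_prod_def lessThan_atLeast0)
  finally show ?thesis .
qed

lemma observable_outcomes_finite_nonempty:
  assumes "observable d X E" "d > 0"
  shows "finite X" "X \<noteq> {}"
proof -
  show "finite X" using assms(1) by (simp add: observable_def)
  have "msum d X E $$ (0,0) = 1" using assms by (simp add: observable_def)
  then show "X \<noteq> {}" using assms(2) by (auto simp: msum_def)
qed

lemma instrument_sum_mtrace:
  assumes "observable m X E" "E_instrument m X E I" "A \<in> carrier_mat m m"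
  shows "(\<Sum>x\<in>X. mtrace (I x A)) = mtrace A"
proof -
  have E: "\<forall>x\<in>X. E x \<in> carrier_mat m m" and sum_E: "msum m X E = 1\<^sub>m m"
    using assms(1) by (auto simp: observable_def psd_def)
  have "(\<Sum>x\<in>X. mtrace (I x A)) = (\<Sum>x\<in>X. mtrace (E x * A))"
    using assms E by (intro sum.cong refl mtrace_eq_on_carrier_if_eq_on_states)
      (auto simp: E_instrument_def cp_map_def)
  also have "\<dots> = mtrace A"
    using assms(3) E by (simp add: sum_mtrace_mult_msum sum_E)
  finally show ?thesis .
qed

lemma ptrace_carrier: "ptrace2 m n M \<in> carrier_mat m m"
  by (simp add: ptrace2_def)

lemma ptrace_add:
  assumes "A \<in> carrier_mat (m*n) (m*n)" "B \<in> carrier_mat (m*n) (m*n)"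
  shows "ptrace2 m n (A + B) = ptrace2 m n A + ptrace2 m n B"
  using assms by (intro eq_matI) (auto simp: ptrace2_def kron_index_less sum.distrib)

lemma ptrace_smult:
  assumes "A \<in> carrier_mat (m*n) (m*n)"
  shows "ptrace2 m n (c \<cdot>\<^sub>m A) = c \<cdot>\<^sub>m ptrace2 m n A"
  using assms by (intro eq_matI) (auto simp: ptrace2_def kron_index_less sum_distrib_left)

lemma mtrace_ptrace:
  assumes "M \<in> carrier_mat (m*n) (m*n)"
  shows "mtrace (ptrace2 m n M) = mtrace M"
  using assms by (simp add: mtrace_def ptrace2_def sum_lessThan_mult_split)

lemma ptrace_kron:
  assumes "\<rho> \<in> carrier_mat m m" "\<xi> \<in> carrier_mat n n" "mtrace \<xi> = 1"
  shows "ptrace2 m n (kron \<rho> \<xi>) = \<rho>"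
proof (rule eq_matI)
  fix i j assume "i < dim_row \<rho>" "j < dim_col \<rho>"
  then have ij: "i < m" "j < m" using assms by simp_all
  have "ptrace2 m n (kron \<rho> \<xi>) $$ (i,j) = (\<Sum>c<n. \<rho> $$ (i,j) * \<xi> $$ (c,c))"
    using ij assms by (simp add: ptrace2_def kron_def) (intro sum.cong refl, simp add: kron_index_less)
  also have "\<dots> = \<rho> $$ (i,j)" using assms by (simp add: mtrace_def sum_distrib_left[symmetric])
  finally show "ptrace2 m n (kron \<rho> \<xi>) $$ (i,j) = \<rho> $$ (i,j)" .
qed (use assms in \<open>simp_all add: ptrace2_def\<close>)

text \<open>The vector \<open>u \<otimes> e\<^sub>c\<close>.\<close>

definition kron_unit_vec :: "nat \<Rightarrow> nat \<Rightarrow> complex vec \<Rightarrow> nat \<Rightarrow> complex vec" where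
  "kron_unit_vec m n u c = vec (m*n) (\<lambda>p. if p mod n = c then u $ (p div n) else 0)"

lemma qform_ptrace:
  assumes "M \<in> carrier_mat (m*n) (m*n)"
  shows "qform (ptrace2 m n M) u = (\<Sum>c<n. qform M (kron_unit_vec m n u c))"
proof -
  have "(\<Sum>c<n. qform M (kron_unit_vec m n u c))
     = (\<Sum>c<n. \<Sum>i<m. \<Sum>a<n. \<Sum>j<m. \<Sum>b<n. (if a = c then cnj (u $ i) else 0)
          * M $$ (i*n+a, j*n+b) * (if b = c then u $ j else 0))"
    using assms by (simp add: qform_def kron_unit_vec_def sum_lessThan_mult_split kron_index_less)
      (intro sum.cong refl, simp)
  also have "\<dots> = (\<Sum>c<n. \<Sum>i<m. \<Sum>j<m. cnj (u $ i) * M $$ (i*n+c, j*n+c) * u $ j)"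
    by (rule sum.cong[OF refl])+
      (simp add: if_distrib[of "\<lambda>x. x * _"] if_distrib[of "\<lambda>x. _ * x"]
        if_distrib[of "\<lambda>x. x * _ * _"] sum.delta' cong: if_cong, subst sum.swap, simp)
  also have "\<dots> = qform (ptrace2 m n M) u"
    by (simp add: qform_def ptrace2_def sum_distrib_left sum_distrib_right sum.swap[of _ "{..<n}"])
  finally show ?thesis by simp
qed

lemma psd_ptrace:
  assumes "psd (m*n) M"
  shows "psd m (ptrace2 m n M)"
  using assms unfolding psd_def
  by (auto simp: ptrace_carrier qform_ptrace Im_sum Re_sum kron_unit_vec_def intro: sum_nonneg)

lemma pd_ptrace:
  assumes pd: "pd (m*n) M" and n: "n > 0"
  shows "pd m (ptrace2 m n M)"
  unfolding pd_def
proof (intro conjI ballI impI psd_ptrace)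
  show psd: "psd (m*n) M" using pd by (simp add: pd_def)
  fix u :: "complex vec" assume u: "u \<in> carrier_vec m" and nz: "u \<noteq> 0\<^sub>v m"
  obtain i where i: "i < m" "u $ i \<noteq> 0" using u nz by (rule nonzero_vec_obtain_index)
  have "kron_unit_vec m n u 0 $ (i*n) \<noteq> 0\<^sub>v (m*n) $ (i*n)"
    using i n kron_index_less[of i m 0 n] by (simp add: kron_unit_vec_def)
  then have "kron_unit_vec m n u 0 \<noteq> 0\<^sub>v (m*n)" by auto
  then have "Re (qform M (kron_unit_vec m n u 0)) > 0"
    using pd by (auto simp: pd_def kron_unit_vec_def)
  moreover have "\<forall>c. Re (qform M (kron_unit_vec m n u c)) \<ge> 0"
    using psd by (auto simp: psd_def kron_unit_vec_def)
  ultimately show "Re (qform (ptrace2 m n M) u) > 0"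
    unfolding qform_ptrace[OF psd[unfolded psd_def, THEN conjunct1]] Re_sum
    using n by (intro sum_pos2[of "{..<n}" 0]) auto
qed

lemma full_rank_state_ptrace:
  assumes "full_rank_state (m*n) \<sigma>" "n > 0"
  shows "full_rank_state m (ptrace2 m n \<sigma>)"
  using assms pd_ptrace mtrace_ptrace
  by (fastforce simp: full_rank_state_def is_state_def pd_def psd_def)

lemma ptrace_block:
  assumes "a < k" "b < k"
  shows "ptrace2 m n (mat (m*n) (m*n) (\<lambda>(i,j). M $$ (a*(m*n) + i, b*(m*n) + j)))
       = mat m m (\<lambda>(i,j). ptrace2 (k*m) n M $$ (a*m + i, b*m + j))"
proof (rule eq_matI)
  fix i j assume "i < dim_row (mat m m (\<lambda>(i,j). ptrace2 (k*m) n M $$ (a*m + i, b*m + j)))"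
    "j < dim_col (mat m m (\<lambda>(i,j). ptrace2 (k*m) n M $$ (a*m + i, b*m + j)))"
  then have ij: "i < m" "j < m" by simp_all
  have "a*m + i < k*m" "b*m + j < k*m" using ij assms by (simp_all add: kron_index_less)
  moreover have "i*n + c < m*n" "j*n + c < m*n" if "c < n" for c
    using ij that by (simp_all add: kron_index_less)
  ultimately show "ptrace2 m n (mat (m*n) (m*n) (\<lambda>(i,j). M $$ (a*(m*n) + i, b*(m*n) + j))) $$ (i,j)
      = mat m m (\<lambda>(i,j). ptrace2 (k*m) n M $$ (a*m + i, b*m + j)) $$ (i,j)"
    using ij by (auto simp: ptrace2_def algebra_simps intro!: sum.cong)
qed (simp_all add: ptrace2_def)

subsection \<open>Direct sums over a pointer basis\<close>

text \<open>\<open>pointer_sum n m F\<close> is \<open>\<Sum>\<^sub>s F s \<otimes> |s\<rangle>\<langle>s|\<close> on \<open>C\<^sup>m \<otimes> C\<^sup>n\<close>, with the Kronecker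
  indexing \<open>(u,s) \<mapsto> u*n + s\<close>.\<close>

definition pointer_sum :: "nat \<Rightarrow> nat \<Rightarrow> (nat \<Rightarrow> complex mat) \<Rightarrow> complex mat" where
  "pointer_sum n m F = mat (m*n) (m*n)
     (\<lambda>(p,q). if p mod n = q mod n then F (p mod n) $$ (p div n, q div n) else 0)"

lemma pointer_sum_carrier: "pointer_sum n m F \<in> carrier_mat (m*n) (m*n)"
  by (simp add: pointer_sum_def)

lemma pointer_sum_cong: "(\<And>s. s < n \<Longrightarrow> F s = G s) \<Longrightarrow> pointer_sum n m F = pointer_sum n m G"
  unfolding pointer_sum_def by (intro eq_matI) (auto simp: kron_index_mod_less)

lemma pointer_sum_add:
  assumes "\<forall>s<n. F s \<in> carrier_mat m m \<and> G s \<in> carrier_mat m m"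
  shows "pointer_sum n m (\<lambda>s. F s + G s) = pointer_sum n m F + pointer_sum n m G"
proof (rule eq_matI)
  fix p q assume "p < dim_row (pointer_sum n m F + pointer_sum n m G)"
    "q < dim_col (pointer_sum n m F + pointer_sum n m G)"
  then have pq: "p < m*n" "q < m*n" by (simp_all add: pointer_sum_def)
  moreover have "F (q mod n) \<in> carrier_mat m m" "G (q mod n) \<in> carrier_mat m m"
    using assms kron_index_mod_less[OF pq(2)] by auto
  ultimately show "pointer_sum n m (\<lambda>s. F s + G s) $$ (p,q) = (pointer_sum n m F + pointer_sum n m G) $$ (p,q)"
    using kron_index_div_less[OF pq(1)] kron_index_div_less[OF pq(2)] by (auto simp: pointer_sum_def)
qed (simp_all add: pointer_sum_def)

lemma pointer_sum_smult:
  assumes "\<forall>s<n. F s \<in> carrier_mat m m"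
  shows "pointer_sum n m (\<lambda>s. c \<cdot>\<^sub>m F s) = c \<cdot>\<^sub>m pointer_sum n m F"
proof (rule eq_matI)
  fix p q assume "p < dim_row (c \<cdot>\<^sub>m pointer_sum n m F)" "q < dim_col (c \<cdot>\<^sub>m pointer_sum n m F)"
  then have pq: "p < m*n" "q < m*n" by (simp_all add: pointer_sum_def)
  moreover have "F (q mod n) \<in> carrier_mat m m" using assms kron_index_mod_less[OF pq(2)] by auto
  ultimately show "pointer_sum n m (\<lambda>s. c \<cdot>\<^sub>m F s) $$ (p,q) = (c \<cdot>\<^sub>m pointer_sum n m F) $$ (p,q)"
    using kron_index_div_less[OF pq(1)] kron_index_div_less[OF pq(2)] by (auto simp: pointer_sum_def)
qed (simp_all add: pointer_sum_def)

lemma mtrace_pointer_sum: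
  assumes "\<forall>s<n. F s \<in> carrier_mat m m"
  shows "mtrace (pointer_sum n m F) = (\<Sum>s<n. mtrace (F s))"
proof -
  have "mtrace (pointer_sum n m F) = (\<Sum>u<m. \<Sum>s<n. F s $$ (u,u))"
    by (simp add: mtrace_def pointer_sum_def sum_lessThan_mult_split kron_index_less)
  also have "\<dots> = (\<Sum>s<n. mtrace (F s))"
    using assms by (subst sum.swap) (auto simp: mtrace_def intro!: sum.cong)
  finally show ?thesis .
qed

lemma qform_pointer_sum:
  assumes "\<forall>s<n. F s \<in> carrier_mat m m"
  shows "qform (pointer_sum n m F) v = (\<Sum>s<n. qform (F s) (vec m (\<lambda>u. v $ (u*n+s))))"
proof -
  have "qform (pointer_sum n m F) v
      = (\<Sum>u<m. \<Sum>s<n. \<Sum>w<m. \<Sum>t<n. cnj (v $ (u*n+s)) * (if s = t then F s $$ (u,w) else 0) * v $ (w*n+t))"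
    by (simp add: qform_def pointer_sum_def sum_lessThan_mult_split kron_index_less)
      (intro sum.cong refl, simp)
  also have "\<dots> = (\<Sum>s<n. \<Sum>u<m. \<Sum>w<m. cnj (v $ (u*n+s)) * F s $$ (u,w) * v $ (w*n+s))"
    by (subst sum.swap) (simp add: if_distrib[of "\<lambda>x. _ * x * _"] cong: if_cong)
  also have "\<dots> = (\<Sum>s<n. qform (F s) (vec m (\<lambda>u. v $ (u*n+s))))"
    using assms by (intro sum.cong refl) (auto simp: qform_def intro!: sum.cong)
  finally show ?thesis .
qed

lemma psd_pointer_sum:
  assumes "\<forall>s<n. psd m (F s)"
  shows "psd (m*n) (pointer_sum n m F)"
proof -
  have "\<forall>s<n. F s \<in> carrier_mat m m" using assms by (auto simp: psd_def)
  then show ?thesis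
    using assms unfolding psd_def
    by (auto simp: pointer_sum_carrier qform_pointer_sum Im_sum Re_sum intro: sum_nonneg)
qed

lemma pd_pointer_sum:
  assumes pd: "\<forall>s<n. pd m (F s)"
  shows "pd (m*n) (pointer_sum n m F)"
  unfolding pd_def
proof (intro conjI ballI impI psd_pointer_sum)
  show psd: "\<forall>s<n. psd m (F s)" using pd by (auto simp: pd_def)
  fix v :: "complex vec" assume v: "v \<in> carrier_vec (m*n)" and nz: "v \<noteq> 0\<^sub>v (m*n)"
  obtain p where p: "p < m*n" "v $ p \<noteq> 0" using v nz by (rule nonzero_vec_obtain_index)
  define u s where "u = p div n" and "s = p mod n"
  have us: "u < m" "s < n" "p = u*n + s"
    using p kron_index_div_less kron_index_mod_less by (auto simp: u_def s_def)
  then have "vec m (\<lambda>u. v $ (u*n+s)) $ u \<noteq> 0\<^sub>v m $ u" using p by simp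
  then have "vec m (\<lambda>u. v $ (u*n+s)) \<noteq> 0\<^sub>v m" by auto
  then have "Re (qform (F s) (vec m (\<lambda>u. v $ (u*n+s)))) > 0"
    using pd us by (auto simp: pd_def)
  moreover have "\<forall>s<n. Re (qform (F s) (vec m (\<lambda>u. v $ (u*n+s)))) \<ge> 0"
    using psd by (auto simp: psd_def)
  moreover have "\<forall>s<n. F s \<in> carrier_mat m m" using psd by (auto simp: psd_def)
  ultimately show "Re (qform (pointer_sum n m F) v) > 0"
    using us by (auto simp: qform_pointer_sum Re_sum intro!: sum_pos2[of "{..<n}" s])
qed

definition diagm :: "nat \<Rightarrow> (nat \<Rightarrow> complex) \<Rightarrow> complex mat" where
  "diagm d f = mat d d (\<lambda>(i,j). if i = j then f i else 0)"

lemma qform_diagm: "qform (diagm d f) v = (\<Sum>i<d. f i * complex_of_real ((cmod (v $ i))^2))"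
proof -
  have "qform (diagm d f) v = (\<Sum>i<d. f i * (v $ i * cnj (v $ i)))"
    by (simp add: qform_def diagm_def if_distrib[of "\<lambda>x. _ * x * _"] cong: if_cong)
      (simp add: algebra_simps)
  then show ?thesis unfolding complex_norm_square .
qed

lemma diagm_carrier: "diagm d f \<in> carrier_mat d d"
  by (simp add: diagm_def)

lemma psd_diagm:
  assumes "\<forall>i<d. Im (f i) = 0 \<and> Re (f i) \<ge> 0"
  shows "psd d (diagm d f)"
  using assms unfolding psd_def
  by (auto simp: diagm_carrier qform_diagm Im_sum Re_sum intro: sum_nonneg)

lemma pd_diagm:
  assumes pos: "\<forall>i<d. Im (f i) = 0 \<and> Re (f i) > 0"
  shows "pd d (diagm d f)"
  unfolding pd_def
proof (intro conjI ballI impI psd_diagm)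
  show "\<forall>i<d. Im (f i) = 0 \<and> Re (f i) \<ge> 0" using pos by (auto simp: less_imp_le)
  fix v :: "complex vec" assume v: "v \<in> carrier_vec d" and nz: "v \<noteq> 0\<^sub>v d"
  obtain i where i: "i < d" "v $ i \<noteq> 0" using v nz by (rule nonzero_vec_obtain_index)
  show "Re (qform (diagm d f) v) > 0"
    unfolding qform_diagm Re_sum using pos i
    by (intro sum_pos2[of "{..<d}" i]) (auto simp: less_imp_le)
qed

lemma diagm_mult:
  assumes "A \<in> carrier_mat d c"
  shows "diagm d f * A = mat d c (\<lambda>(i,j). f i * A $$ (i,j))"
proof (rule eq_matI)
  fix i j assume "i < dim_row (mat d c (\<lambda>(i,j). f i * A $$ (i,j)))"
    "j < dim_col (mat d c (\<lambda>(i,j). f i * A $$ (i,j)))"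
  then have ij: "i < d" "j < c" by simp_all
  have "(diagm d f * A) $$ (i,j) = (\<Sum>r<d. (if i = r then f i else 0) * A $$ (r,j))"
    using ij assms by (simp add: diagm_def scalar_prod_def lessThan_atLeast0)
  also have "\<dots> = f i * A $$ (i,j)"
    using ij by (simp add: if_distrib[of "\<lambda>x. x * _"] cong: if_cong)
  finally show "(diagm d f * A) $$ (i,j) = mat d c (\<lambda>(i,j). f i * A $$ (i,j)) $$ (i,j)"
    using ij by simp
qed (use assms in \<open>simp_all add: diagm_def\<close>)

lemma kron_one_diagm:
  assumes "n > 0"
  shows "kron (1\<^sub>m m) (diagm n f) = diagm (m*n) (\<lambda>p. f (p mod n))"
proof (rule eq_matI)
  fix p q assume "p < dim_row (diagm (m*n) (\<lambda>p. f (p mod n)))"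
    "q < dim_col (diagm (m*n) (\<lambda>p. f (p mod n)))"
  then have pq: "p < m*n" "q < m*n" by (simp_all add: diagm_def)
  have "(p div n = q div n \<and> p mod n = q mod n) = (p = q)"
    by (metis div_mult_mod_eq)
  then show "kron (1\<^sub>m m) (diagm n f) $$ (p,q) = diagm (m*n) (\<lambda>p. f (p mod n)) $$ (p,q)"
    using pq kron_index_div_less kron_index_mod_less by (auto simp: kron_def diagm_def)
qed (simp_all add: kron_def diagm_def)

definition maximally_mixed :: "nat \<Rightarrow> complex mat" where
  "maximally_mixed n = diagm n (\<lambda>_. complex_of_real (1 / real n))"

lemma full_rank_state_maximally_mixed:
  assumes "n > 0"
  shows "full_rank_state n (maximally_mixed n)"
proof -
  have "pd n (maximally_mixed n)" unfolding maximally_mixed_def using assms by (intro pd_diagm) simp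
  moreover have "mtrace (maximally_mixed n) = 1"
    using assms by (simp add: maximally_mixed_def diagm_def mtrace_def)
  ultimately show ?thesis by (simp add: full_rank_state_def is_state_def pd_def)
qed

subsection \<open>The recording channel\<close>

definition record_channel ::
    "nat \<Rightarrow> nat \<Rightarrow> (nat \<Rightarrow> complex mat \<Rightarrow> complex mat) \<Rightarrow> complex mat \<Rightarrow> complex mat" where
  "record_channel m n \<Phi> \<sigma> = pointer_sum n m (\<lambda>s. \<Phi> s (ptrace2 m n \<sigma>))"

lemma lin_map_record_channel:
  assumes "\<forall>s<n. lin_map m m (\<Phi> s)"
  shows "lin_map (m*n) (m*n) (record_channel m n \<Phi>)"
  unfolding lin_map_def
proof (intro conjI ballI allI)
  have \<Phi>: "\<forall>s<n. \<forall>A. \<Phi> s (ptrace2 m n A) \<in> carrier_mat m m"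
    using assms ptrace_carrier by (auto simp: lin_map_def)
  fix A B :: "complex mat" assume A: "A \<in> carrier_mat (m*n) (m*n)" and B: "B \<in> carrier_mat (m*n) (m*n)"
  have "record_channel m n \<Phi> (A + B)
      = pointer_sum n m (\<lambda>s. \<Phi> s (ptrace2 m n A) + \<Phi> s (ptrace2 m n B))"
    unfolding record_channel_def using assms ptrace_carrier
    by (intro pointer_sum_cong) (simp add: ptrace_add[OF A B] lin_map_def)
  also have "\<dots> = record_channel m n \<Phi> A + record_channel m n \<Phi> B"
    unfolding record_channel_def using \<Phi> by (intro pointer_sum_add) simp
  finally show "record_channel m n \<Phi> (A + B) = record_channel m n \<Phi> A + record_channel m n \<Phi> B" .
next
  have \<Phi>: "\<forall>s<n. \<forall>A. \<Phi> s (ptrace2 m n A) \<in> carrier_mat m m"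
    using assms ptrace_carrier by (auto simp: lin_map_def)
  fix A :: "complex mat" and c assume A: "A \<in> carrier_mat (m*n) (m*n)"
  have "record_channel m n \<Phi> (c \<cdot>\<^sub>m A) = pointer_sum n m (\<lambda>s. c \<cdot>\<^sub>m \<Phi> s (ptrace2 m n A))"
    unfolding record_channel_def using assms ptrace_carrier
    by (intro pointer_sum_cong) (simp add: ptrace_smult[OF A] lin_map_def)
  also have "\<dots> = c \<cdot>\<^sub>m record_channel m n \<Phi> A"
    unfolding record_channel_def using \<Phi> by (intro pointer_sum_smult) simp
  finally show "record_channel m n \<Phi> (c \<cdot>\<^sub>m A) = c \<cdot>\<^sub>m record_channel m n \<Phi> A" .
qed (simp add: record_channel_def pointer_sum_carrier)

lemma ampl_record_channel:
  assumes n: "n > 0" and m: "m > 0"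
  shows "ampl k (m*n) (m*n) (record_channel m n \<Phi>) M
       = pointer_sum n (k*m) (\<lambda>s. ampl k m m (\<Phi> s) (ptrace2 (k*m) n M))"
proof (rule eq_matI)
  fix p q assume "p < dim_row (pointer_sum n (k*m) (\<lambda>s. ampl k m m (\<Phi> s) (ptrace2 (k*m) n M)))"
    "q < dim_col (pointer_sum n (k*m) (\<lambda>s. ampl k m m (\<Phi> s) (ptrace2 (k*m) n M)))"
  then have pq: "p < k*(m*n)" "q < k*(m*n)" by (simp_all add: pointer_sum_def mult.assoc)
  have "p div n div m = p div (m*n)" "q div n div m = q div (m*n)"
    by (metis div_mult2_eq mult.commute)+
  moreover have "p div (m*n) < k" "q div (m*n) < k" using pq by (simp_all add: less_mult_imp_div_less)
  moreover have "p div n < k*m" "q div n < k*m"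
    using pq by (simp_all add: less_mult_imp_div_less mult.assoc[symmetric])
  ultimately show "ampl k (m*n) (m*n) (record_channel m n \<Phi>) M $$ (p,q)
      = pointer_sum n (k*m) (\<lambda>s. ampl k m m (\<Phi> s) (ptrace2 (k*m) n M)) $$ (p,q)"
    using pq n m
    by (simp add: ampl_def pointer_sum_def record_channel_def mod_mod_cancel mod_mult_div
        ptrace_block mult.assoc)
qed (simp_all add: ampl_def pointer_sum_def mult.assoc)

lemma cp_map_record_channel:
  assumes "\<forall>s<n. cp_map m m (\<Phi> s)" "n > 0" "m > 0"
  shows "cp_map (m*n) (m*n) (record_channel m n \<Phi>)"
  unfolding cp_map_def
proof (intro conjI allI impI)
  show "lin_map (m*n) (m*n) (record_channel m n \<Phi>)"
    using assms by (intro lin_map_record_channel) (simp add: cp_map_def)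
  fix k M assume "psd (k*(m*n)) M"
  then have "psd (k*m) (ptrace2 (k*m) n M)" by (intro psd_ptrace) (simp add: mult.assoc)
  then have "\<forall>s<n. psd (k*m) (ampl k m m (\<Phi> s) (ptrace2 (k*m) n M))"
    using assms by (auto simp: cp_map_def)
  then have "psd ((k*m)*n) (pointer_sum n (k*m) (\<lambda>s. ampl k m m (\<Phi> s) (ptrace2 (k*m) n M)))"
    by (rule psd_pointer_sum)
  then show "psd (k*(m*n)) (ampl k (m*n) (m*n) (record_channel m n \<Phi>) M)"
    using assms by (simp add: ampl_record_channel mult.assoc)
qed

lemma third_law_record_channel:
  assumes cp: "\<forall>s<n. cp_map m m (\<Phi> s)" and "n > 0" "m > 0"
    and trace: "\<forall>A \<in> carrier_mat m m. (\<Sum>s<n. mtrace (\<Phi> s A)) = mtrace A"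
    and full_rank: "\<forall>s<n. \<forall>\<rho>. full_rank_state m \<rho> \<longrightarrow> pd m (\<Phi> s \<rho>)"
  shows "third_law_channel (m*n) (m*n) (record_channel m n \<Phi>)"
proof -
  have \<Phi>: "\<forall>s<n. \<forall>A. \<Phi> s (ptrace2 m n A) \<in> carrier_mat m m"
    using cp ptrace_carrier by (auto simp: cp_map_def lin_map_def)
  have tr: "mtrace (record_channel m n \<Phi> A) = mtrace A" if "A \<in> carrier_mat (m*n) (m*n)" for A
    using that \<Phi> trace ptrace_carrier
    by (simp add: record_channel_def mtrace_pointer_sum mtrace_ptrace)
  have "pd (m*n) (record_channel m n \<Phi> \<sigma>)" if "full_rank_state (m*n) \<sigma>" for \<sigma>
    unfolding record_channel_def using that assms
    by (intro pd_pointer_sum) (simp add: full_rank_state_ptrace)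
  then show ?thesis
    using cp_map_record_channel[OF assms(1-3)] tr
    by (auto simp: third_law_channel_def channel_def full_rank_state_def is_state_def pd_def psd_def)
qed

lemma ptrace_readout_pointer_sum:
  assumes "n > 0" and F: "\<forall>s<n. F s \<in> carrier_mat m m"
  shows "ptrace2 m n (kron (1\<^sub>m m) (diagm n f) * pointer_sum n m F) = msum m {..<n} (\<lambda>s. f s \<cdot>\<^sub>m F s)"
proof (rule eq_matI)
  have readout: "kron (1\<^sub>m m) (diagm n f) * pointer_sum n m F
      = mat (m*n) (m*n) (\<lambda>(p,q). f (p mod n) * pointer_sum n m F $$ (p,q))"
    using assms(1) by (simp add: kron_one_diagm diagm_mult pointer_sum_carrier)
  fix i j assume "i < dim_row (msum m {..<n} (\<lambda>s. f s \<cdot>\<^sub>m F s))"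
    "j < dim_col (msum m {..<n} (\<lambda>s. f s \<cdot>\<^sub>m F s))"
  then have ij: "i < m" "j < m" by (simp_all add: msum_def)
  then have "\<And>c. c < n \<Longrightarrow> i*n + c < m*n \<and> j*n + c < m*n" by (simp add: kron_index_less)
  then show "ptrace2 m n (kron (1\<^sub>m m) (diagm n f) * pointer_sum n m F) $$ (i,j)
      = msum m {..<n} (\<lambda>s. f s \<cdot>\<^sub>m F s) $$ (i,j)"
    using ij F unfolding readout by (auto simp: ptrace2_def msum_def pointer_sum_def intro!: sum.cong)
qed (simp_all add: ptrace2_def msum_def)

lemma msum_delta:
  fixes n :: nat
  assumes c: "c < n" and F: "\<forall>s<n. F s \<in> carrier_mat m m"
  shows "msum m {..<n} (\<lambda>s. (if s = c then 1 else 0) \<cdot>\<^sub>m F s) = F c"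
proof (rule eq_matI)
  fix i j assume "i < dim_row (F c)" "j < dim_col (F c)"
  then have ij: "i < m" "j < m" using F c by auto
  then have "((if s = c then 1 else 0) \<cdot>\<^sub>m F s) $$ (i,j) = (if s = c then F c $$ (i,j) else 0)"
    if "s < n" for s
    using F that by auto
  then show "msum m {..<n} (\<lambda>s. (if s = c then 1 else 0) \<cdot>\<^sub>m F s) $$ (i,j) = F c $$ (i,j)"
    using c ij by (simp add: msum_def)
qed (use assms in \<open>auto simp: msum_def\<close>)

definition pointer_proj :: "(nat \<Rightarrow> 'x) \<Rightarrow> nat \<Rightarrow> 'x \<Rightarrow> complex mat" where
  "pointer_proj g n x = diagm n (\<lambda>s. if g s = x then 1 else 0)"

lemma implements_record_channel:
  assumes g: "bij_betw g {..<n} X" and n: "n > 0"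
    and I: "\<forall>x\<in>X. \<forall>\<rho> \<in> carrier_mat m m. I x \<rho> \<in> carrier_mat m m"
    and ch: "channel (m*n) (m*n) (record_channel m n (\<lambda>s. I (g s)))"
  shows "implements m X I n (maximally_mixed n) (record_channel m n (\<lambda>s. I (g s))) (pointer_proj g n)"
proof -
  have gX: "\<And>s. s < n \<Longrightarrow> g s \<in> X" using g by (auto simp: bij_betw_def)
  have \<xi>: "full_rank_state n (maximally_mixed n)" using n by (rule full_rank_state_maximally_mixed)
  have "msum n X (pointer_proj g n) = 1\<^sub>m n"
    using g by (intro eq_matI) (auto simp: msum_def pointer_proj_def diagm_def bij_betw_def)
  moreover have "I x \<rho> = ptrace2 m n (kron (1\<^sub>m m) (pointer_proj g n x)
      * record_channel m n (\<lambda>s. I (g s)) (kron \<rho> (maximally_mixed n)))"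
    if x: "x \<in> X" and \<rho>: "\<rho> \<in> carrier_mat m m" for x \<rho>
  proof -
    obtain c where c: "c < n" "g c = x" and gc: "\<And>s. s < n \<Longrightarrow> g s = x \<longleftrightarrow> s = c"
      using g x by (auto simp: bij_betw_def inj_on_def)
    have "ptrace2 m n (kron \<rho> (maximally_mixed n)) = \<rho>"
      using \<rho> \<xi> by (intro ptrace_kron) (auto simp: full_rank_state_def is_state_def psd_def)
    then have "ptrace2 m n (kron (1\<^sub>m m) (pointer_proj g n x)
        * record_channel m n (\<lambda>s. I (g s)) (kron \<rho> (maximally_mixed n)))
      = msum m {..<n} (\<lambda>s. (if g s = x then 1 else 0) \<cdot>\<^sub>m I (g s) \<rho>)"
      using n I \<rho> gX
      by (simp add: pointer_proj_def record_channel_def ptrace_readout_pointer_sum)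
    also have "\<dots> = msum m {..<n} (\<lambda>s. (if s = c then 1 else 0) \<cdot>\<^sub>m I (g s) \<rho>)"
      using gc by (auto simp: msum_def intro!: eq_matI sum.cong)
    also have "\<dots> = I x \<rho>"
      using c I \<rho> gX by (simp add: msum_delta)
    finally show ?thesis by simp
  qed
  ultimately show ?thesis
    using \<xi> ch by (auto simp: implements_def full_rank_state_def pointer_proj_def intro!: psd_diagm)
qed

theorem mainTheorem13:
  fixes dS :: nat and X :: "'x set" and E :: "'x \<Rightarrow> complex mat"
    and I :: "'x \<Rightarrow> complex mat \<Rightarrow> complex mat"
  assumes "2 \<le> dS"
    and "completely_unsharp dS X E"
    and "E_instrument dS X E I"
    and "\<forall>\<rho> x. full_rank_state dS \<rho> \<and> x \<in> X \<longrightarrow> pd dS (I x \<rho>)"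
  shows "\<exists>dA \<xi> Ec Z. implements dS X I dA \<xi> Ec Z \<and> third_law_scheme dS dA \<xi> Ec"
proof -
  have obs: "observable dS X E" using assms(2) by (simp add: completely_unsharp_def)
  then obtain g where g: "bij_betw g {..<card X} X" and n: "card X > 0"
    using assms(1) observable_outcomes_finite_nonempty[OF obs] ex_bij_betw_nat_finite
    by (auto simp: lessThan_atLeast0 card_gt_0_iff)
  have gX: "\<forall>s<card X. g s \<in> X" using g by (auto simp: bij_betw_def)
  have cp: "\<forall>x\<in>X. cp_map dS dS (I x)" using assms(3) by (simp add: E_instrument_def)
  have "(\<Sum>s<card X. mtrace (I (g s) A)) = mtrace A" if "A \<in> carrier_mat dS dS" for A
    using sum.reindex_bij_betw[OF g, of "\<lambda>x. mtrace (I x A)"]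
      instrument_sum_mtrace[OF obs assms(3) that] by simp
  then have third: "third_law_channel (dS * card X) (dS * card X)
      (record_channel dS (card X) (\<lambda>s. I (g s)))"
    using cp gX n assms(1,4) by (intro third_law_record_channel) auto
  moreover have "implements dS X I (card X) (maximally_mixed (card X))
      (record_channel dS (card X) (\<lambda>s. I (g s))) (pointer_proj g (card X))"
    using g n cp third
    by (intro implements_record_channel) (auto simp: third_law_channel_def cp_map_def lin_map_def)
  ultimately show ?thesis
    using full_rank_state_maximally_mixed[OF n] by (auto simp: third_law_scheme_def)
qed

end
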